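(* Let $A,B\subset\mathbb{H}$ be finite sets with $|A|\geq 2$ and $|B|\geq 2$. Then there exists a line $\ell$ in $\mathbb{H}^2$ such that $2\leq|(A\times B)\cap\ell|\leq 5$.
   Context: $\mathbb{H}$ denotes the quaternions. $\mathbb{H}^2$ is regarded as a left vector space over $\mathbb{H}$. A line in $\mathbb{H}^2$ is a set of the form $\{p+\lambda v:\lambda\in\mathbb{H}\}$ with $p,v\in\mathbb{H}^2$, $v\neq 0$, where $\lambda v$ denotes left scalar multiplication. Equivalently, lines are the sets $\{(x,y):x=c\}$ for $c\in\mathbb{H}$ and the sets $\{(x,y): y=xm+c\}$ for $m,c\in\mathbb{H}$. *)

theory Defs
  imports Complex_Main
begin

text \<open>The quaternions: a = a0 + a1 i + a2 j + a3 k with real coefficients and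
Hamilton's rules i^2 = j^2 = k^2 = ijk = -1.\<close>

datatype quat = Quat (q0: real) (q1: real) (q2: real) (q3: real)

instantiation quat :: "{zero, one, plus, times}"
begin
definition "0 = Quat 0 0 0 0"
definition "1 = Quat 1 0 0 0"
definition "a + b = Quat (q0 a + q0 b) (q1 a + q1 b) (q2 a + q2 b) (q3 a + q3 b)"
definition "a * b = Quat
   (q0 a * q0 b - q1 a * q1 b - q2 a * q2 b - q3 a * q3 b)
   (q0 a * q1 b + q1 a * q0 b + q2 a * q3 b - q3 a * q2 b)
   (q0 a * q2 b - q1 a * q3 b + q2 a * q0 b + q3 a * q1 b)
   (q0 a * q3 b + q1 a * q2 b - q2 a * q1 b + q3 a * q0 b)"
instance ..
end

definition quat_line :: "(quat \<times> quat) set \<Rightarrow> bool" where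
  "quat_line L \<longleftrightarrow> (\<exists>p v. v \<noteq> (0, 0) \<and>
      L = {(fst p + t * fst v, snd p + t * snd v) | t. True})"

end

theory Submission
  imports Defs "HOL-Analysis.Analysis"
begin

(* Take a closest pair a1, a2 of A, a farthest pair b1, b2 of B, and the line through
   (a2, b2) and (a1, b1), with direction (d, e) = (a1 - a2, b1 - b2). Two of its points,
   with parameters t and s, differ by ((t - s) d, (t - s) e), and the quaternion norm is
   multiplicative. If both points lie in A \<times> B, minimality of |d| forces |t - s| \<ge> 1, so
   their B-coordinates are at distance at least |e|, hence exactly |e| by maximality.
   The B-coordinates of the points of A \<times> B on the line thus form an equilateral set
   in H = R^4, which has at most 5 elements, and the line contains the two chosen points. *)

instantiation quat :: minus
begin
definition "a - b = Quat (q0 a - q0 b) (q1 a - q1 b) (q2 a - q2 b) (q3 a - q3 b)"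
instance ..
end

lemma quat_add_0_right [simp]: "p + 0 = (p::quat)"
  by (simp add: plus_quat_def zero_quat_def quat.expand)

lemma quat_mult_0_left [simp]: "0 * v = (0::quat)"
  by (simp add: times_quat_def zero_quat_def)

lemma quat_mult_1_left [simp]: "1 * v = (v::quat)"
  by (simp add: times_quat_def one_quat_def quat.expand)

lemma quat_add_diff_cancel [simp]: "p + (q - p) = (q::quat)"
  by (simp add: plus_quat_def minus_quat_def quat.expand)

lemma quat_diff_eq_0_iff: "x - y = 0 \<longleftrightarrow> x = (y::quat)"
  by (auto simp: minus_quat_def zero_quat_def quat.expand)

lemma quat_add_mult_diff: "(p + t * v) - (p + s * v) = (t - s) * (v::quat)"
  by (simp add: plus_quat_def minus_quat_def times_quat_def algebra_simps)

definition quat_vec :: "quat \<Rightarrow> (real \<times> real) \<times> (real \<times> real)" where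
  "quat_vec q = ((q0 q, q1 q), (q2 q, q3 q))"

definition quat_norm :: "quat \<Rightarrow> real" where
  "quat_norm q = norm (quat_vec q)"

lemma dist_quat_vec: "dist (quat_vec x) (quat_vec y) = quat_norm (x - y)"
  by (simp add: quat_norm_def quat_vec_def minus_quat_def dist_norm)

lemma quat_norm_nonneg: "quat_norm q \<ge> 0"
  by (simp add: quat_norm_def)

lemma quat_norm_eq_0_iff: "quat_norm q = 0 \<longleftrightarrow> q = 0"
  by (cases q) (simp add: quat_norm_def quat_vec_def zero_quat_def zero_prod_def)

lemma quat_norm_pos_iff: "quat_norm q > 0 \<longleftrightarrow> q \<noteq> 0"
  using quat_norm_nonneg[of q] quat_norm_eq_0_iff[of q] by linarith

lemma quat_norm_squared: "(quat_norm q)\<^sup>2 = (q0 q)\<^sup>2 + (q1 q)\<^sup>2 + (q2 q)\<^sup>2 + (q3 q)\<^sup>2"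
  by (simp add: quat_norm_def quat_vec_def norm_Pair)

lemma quat_norm_mult: "quat_norm (x * y) = quat_norm x * quat_norm y"
proof -
  have "(quat_norm (x * y))\<^sup>2 = (quat_norm x * quat_norm y)\<^sup>2"
    unfolding power_mult_distrib quat_norm_squared
    by (simp add: times_quat_def power2_eq_square algebra_simps)
  then show ?thesis
    by (simp add: quat_norm_def)
qed

lemma quat_norm_diff_on_line: "quat_norm ((p + t * v) - (p + s * v)) = quat_norm (t - s) * quat_norm v"
  by (simp add: quat_add_mult_diff quat_norm_mult)

lemma independent_if_inner_regular_simplex:
  fixes V :: "'a::real_inner set"
  assumes "finite V" and "c > 0"
    and inner_V: "\<And>v w. v \<in> V \<Longrightarrow> w \<in> V \<Longrightarrow> inner v w = (if v = w then c else c / 2)"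
  shows "independent V"
proof
  assume "dependent V"
  then obtain u v0 where "v0 \<in> V" "u v0 \<noteq> 0" and combination: "(\<Sum>v\<in>V. u v *\<^sub>R v) = 0"
    using dependent_finite[OF \<open>finite V\<close>] by auto
  define s where "s = (\<Sum>v\<in>V. u v)"
  have coeff: "u w = - s" if "w \<in> V" for w
  proof -
    have "0 = inner w (\<Sum>v\<in>V. u v *\<^sub>R v)"
      using combination by simp
    also have "\<dots> = (\<Sum>v\<in>V. c / 2 * u v + (if v = w then c / 2 * u v else 0))"
      unfolding inner_sum_right by (rule sum.cong) (auto simp: inner_V \<open>w \<in> V\<close>)
    also have "\<dots> = c / 2 * (s + u w)"
      using \<open>finite V\<close> \<open>w \<in> V\<close> by (simp add: sum.distrib sum_distrib_left s_def distrib_left)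
    finally show ?thesis
      using \<open>c > 0\<close> by simp
  qed
  have "(\<Sum>w\<in>V. u w) = (\<Sum>w\<in>V. - s)"
    by (intro sum.cong refl coeff)
  then have "(1 + real (card V)) * s = 0"
    unfolding s_def[symmetric] by (simp add: distrib_right)
  then have "s = 0"
    by (metis mult_eq_0_iff of_nat_Suc of_nat_eq_0_iff nat.distinct(1) add.commute)
  then show False
    using coeff[OF \<open>v0 \<in> V\<close>] \<open>u v0 \<noteq> 0\<close> by simp
qed

lemma card_equidistant_le:
  fixes S :: "'a::euclidean_space set"
  assumes equidistant: "\<And>x y. x \<in> S \<Longrightarrow> y \<in> S \<Longrightarrow> x \<noteq> y \<Longrightarrow> dist x y = r"
  shows "card S \<le> DIM('a) + 1"
proof (cases "finite S \<and> S \<noteq> {} \<and> r > 0")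
  case False
  then have "card S \<le> 1" if "finite S"
    using that equidistant zero_less_dist_iff by (fastforce simp: card_le_Suc0_iff_eq)
  then show ?thesis
    by (cases "finite S") auto
next
  case True
  then obtain p where "p \<in> S" and "finite S" and "r > 0"
    by blast
  have inner_diff_self: "inner (x - y) (x - y) = r\<^sup>2" if "x \<in> S" "y \<in> S" "x \<noteq> y" for x y
    using equidistant[OF that] by (simp add: dist_norm flip: power2_norm_eq_inner)
  define V where "V = (\<lambda>x. x - p) ` (S - {p})"
  have inner_V: "inner v w = (if v = w then r\<^sup>2 else r\<^sup>2 / 2)" if "v \<in> V" "w \<in> V" for v w
  proof -
    obtain x y where "x \<in> S - {p}" "v = x - p" "y \<in> S - {p}" "w = y - p"
      using \<open>v \<in> V\<close> \<open>w \<in> V\<close> unfolding V_def by blast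
    then have "inner v v = r\<^sup>2" "inner w w = r\<^sup>2" "v \<noteq> w \<Longrightarrow> inner (v - w) (v - w) = r\<^sup>2"
      using inner_diff_self \<open>p \<in> S\<close> by auto
    then show ?thesis
      by (auto simp: inner_diff_left inner_diff_right inner_commute)
  qed
  have "finite V"
    using \<open>finite S\<close> by (simp add: V_def)
  then have "independent V"
    using \<open>r > 0\<close> inner_V by (intro independent_if_inner_regular_simplex[where c = "r\<^sup>2"]) simp_all
  then have "card V \<le> DIM('a)"
    using independent_bound by blast
  moreover have "card V = card S - 1"
    unfolding V_def using \<open>finite S\<close> \<open>p \<in> S\<close> by (simp add: card_image inj_on_def)
  ultimately show ?thesis
    by linarith
qed

lemma obtain_minimizing_distinct_pair:
  fixes f :: "'a \<Rightarrow> 'a \<Rightarrow> 'b::linorder"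
  assumes "2 \<le> card X"
  obtains a b where "a \<in> X" "b \<in> X" "a \<noteq> b"
    and "\<And>x y. x \<in> X \<Longrightarrow> y \<in> X \<Longrightarrow> x \<noteq> y \<Longrightarrow> f a b \<le> f x y"
proof -
  define P where "P = {(x, y) \<in> X \<times> X. x \<noteq> y}"
  have "finite X"
    using assms card.infinite by fastforce
  have "finite P"
    using \<open>finite X\<close> by (auto simp: P_def intro: finite_subset[of _ "X \<times> X"])
  moreover have "P \<noteq> {}"
    using assms card_le_Suc0_iff_eq[OF \<open>finite X\<close>] by (auto simp: P_def)
  ultimately obtain p where "p \<in> P" and "\<forall>q\<in>P. \<not> case_prod f q < case_prod f p"
    using ex_min_if_finite[of "case_prod f ` P"] by blast
  then show ?thesis
    using that by (force simp: P_def not_less)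
qed

lemma quat_norm_diff_on_line_eq_diameter:
  assumes separated: "\<And>x y. x \<in> A \<Longrightarrow> y \<in> A \<Longrightarrow> x \<noteq> y \<Longrightarrow> quat_norm d \<le> quat_norm (x - y)"
    and diameter: "\<And>x y. x \<in> B \<Longrightarrow> y \<in> B \<Longrightarrow> x \<noteq> y \<Longrightarrow> quat_norm (x - y) \<le> quat_norm e"
    and "d \<noteq> 0" "e \<noteq> 0" "t \<noteq> s"
    and "a + t * d \<in> A" "a + s * d \<in> A" "b + t * e \<in> B" "b + s * e \<in> B"
  shows "quat_norm ((b + t * e) - (b + s * e)) = quat_norm e"
proof -
  have pos: "quat_norm d > 0" "quat_norm e > 0" "quat_norm (t - s) > 0"
    using \<open>d \<noteq> 0\<close> \<open>e \<noteq> 0\<close> \<open>t \<noteq> s\<close> by (simp_all add: quat_norm_pos_iff quat_diff_eq_0_iff)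
  then have "quat_norm ((a + t * d) - (a + s * d)) > 0"
    by (simp add: quat_norm_diff_on_line)
  then have "a + t * d \<noteq> a + s * d"
    by (auto simp: quat_norm_pos_iff quat_diff_eq_0_iff)
  then have "quat_norm d \<le> quat_norm (t - s) * quat_norm d"
    using separated[OF assms(6,7)] by (simp add: quat_norm_diff_on_line)
  then have "1 \<le> quat_norm (t - s)"
    using pos by simp
  then have lower: "quat_norm e \<le> quat_norm ((b + t * e) - (b + s * e))"
    using pos by (simp add: quat_norm_diff_on_line)
  then have "quat_norm ((b + t * e) - (b + s * e)) > 0"
    using pos by linarith
  then have "b + t * e \<noteq> b + s * e"
    by (auto simp: quat_norm_pos_iff quat_diff_eq_0_iff)
  then show ?thesis
    using lower diameter[OF assms(8,9)] by simp
qed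

lemma card_Times_inter_line_le_5:
  assumes separated: "\<And>x y. x \<in> A \<Longrightarrow> y \<in> A \<Longrightarrow> x \<noteq> y \<Longrightarrow> quat_norm d \<le> quat_norm (x - y)"
    and diameter: "\<And>x y. x \<in> B \<Longrightarrow> y \<in> B \<Longrightarrow> x \<noteq> y \<Longrightarrow> quat_norm (x - y) \<le> quat_norm e"
    and "d \<noteq> 0" and "e \<noteq> 0"
  shows "card ((A \<times> B) \<inter> {(a + t * d, b + t * e) | t. True}) \<le> 5"
proof -
  define S where "S = (A \<times> B) \<inter> {(a + t * d, b + t * e) | t. True}"
  have dist_snd: "dist (quat_vec (snd z)) (quat_vec (snd z')) = quat_norm e"
    if z: "z \<in> S" "z' \<in> S" "z \<noteq> z'" for z z'
  proof -
    obtain t s where t: "z = (a + t * d, b + t * e)" and s: "z' = (a + s * d, b + s * e)"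
      using z(1,2) unfolding S_def by blast
    have "t \<noteq> s"
      using t s z(3) by blast
    moreover have "a + t * d \<in> A" "a + s * d \<in> A" "b + t * e \<in> B" "b + s * e \<in> B"
      using t s z(1,2) by (auto simp: S_def)
    ultimately show ?thesis
      using t s quat_norm_diff_on_line_eq_diameter[OF separated diameter \<open>d \<noteq> 0\<close> \<open>e \<noteq> 0\<close>]
      by (simp add: dist_quat_vec)
  qed
  have "inj_on (quat_vec \<circ> snd) S"
  proof (rule inj_onI)
    fix z z' assume "z \<in> S" "z' \<in> S" and same_vec: "(quat_vec \<circ> snd) z = (quat_vec \<circ> snd) z'"
    show "z = z'"
    proof (rule ccontr)
      assume "z \<noteq> z'"
      then have "quat_norm e = 0"
        using dist_snd[OF \<open>z \<in> S\<close> \<open>z' \<in> S\<close>] same_vec by simp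
      with \<open>e \<noteq> 0\<close> show False
        by (simp add: quat_norm_eq_0_iff)
    qed
  qed
  moreover have "card ((quat_vec \<circ> snd) ` S) \<le> DIM((real \<times> real) \<times> (real \<times> real)) + 1"
  proof (rule card_equidistant_le)
    fix x y assume "x \<in> (quat_vec \<circ> snd) ` S" "y \<in> (quat_vec \<circ> snd) ` S" "x \<noteq> y"
    then obtain z z' where "z \<in> S" "z' \<in> S" "z \<noteq> z'" "x = quat_vec (snd z)" "y = quat_vec (snd z')"
      by auto
    then show "dist x y = quat_norm e"
      using dist_snd by simp
  qed
  ultimately have "card S \<le> DIM((real \<times> real) \<times> (real \<times> real)) + 1"
    by (metis card_image)
  then show ?thesis
    by (simp add: S_def)
qed

theorem theorem4:
  fixes A B :: "quat set"
  assumes "finite A" and "finite B" and "card A \<ge> 2" and "card B \<ge> 2"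
  shows "\<exists>L. quat_line L \<and> 2 \<le> card ((A \<times> B) \<inter> L) \<and> card ((A \<times> B) \<inter> L) \<le> 5"
proof -
  obtain a1 a2 where "a1 \<in> A" "a2 \<in> A" "a1 \<noteq> a2"
    and closest: "\<And>x y. x \<in> A \<Longrightarrow> y \<in> A \<Longrightarrow> x \<noteq> y \<Longrightarrow> quat_norm (a1 - a2) \<le> quat_norm (x - y)"
    using obtain_minimizing_distinct_pair[OF \<open>card A \<ge> 2\<close>, of "\<lambda>x y. quat_norm (x - y)"] by metis
  obtain b1 b2 where "b1 \<in> B" "b2 \<in> B" "b1 \<noteq> b2"
    and farthest: "\<And>x y. x \<in> B \<Longrightarrow> y \<in> B \<Longrightarrow> x \<noteq> y \<Longrightarrow> quat_norm (x - y) \<le> quat_norm (b1 - b2)"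
    using obtain_minimizing_distinct_pair[OF \<open>card B \<ge> 2\<close>, of "\<lambda>x y. - quat_norm (x - y)"]
    by (metis neg_le_iff_le)
  define d e where "d = a1 - a2" and "e = b1 - b2"
  have "d \<noteq> 0" "e \<noteq> 0"
    using \<open>a1 \<noteq> a2\<close> \<open>b1 \<noteq> b2\<close> by (simp_all add: d_def e_def quat_diff_eq_0_iff)
  define L where "L = {(a2 + t * d, b2 + t * e) | t. True}"
  have "quat_line L"
    unfolding quat_line_def L_def using \<open>d \<noteq> 0\<close> by force
  have "{(a1, b1), (a2, b2)} \<subseteq> (A \<times> B) \<inter> L"
    using \<open>a1 \<in> A\<close> \<open>a2 \<in> A\<close> \<open>b1 \<in> B\<close> \<open>b2 \<in> B\<close> unfolding L_def d_def e_def
    by (force intro: exI[of _ 0] exI[of _ 1])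
  then have "card {(a1, b1), (a2, b2)} \<le> card ((A \<times> B) \<inter> L)"
    using \<open>finite A\<close> \<open>finite B\<close> by (intro card_mono) auto
  moreover have "card ((A \<times> B) \<inter> L) \<le> 5"
    unfolding L_def using closest[folded d_def] farthest[folded e_def] \<open>d \<noteq> 0\<close> \<open>e \<noteq> 0\<close>
    by (rule card_Times_inter_line_le_5)
  ultimately show ?thesis
    using \<open>quat_line L\<close> \<open>a1 \<noteq> a2\<close> by auto
qed

end
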